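(* Let $\alpha\in(0,1)$, $r>0$ and $\lambda=r\big(\cos\frac{\pi\alpha}{2}+i\sin\frac{\pi\alpha}{2}\big)$. Then for every $x_0\in\mathbb{C}$ the solution of \[ {}^{C}D^\alpha_{0+}x(t)=\lambda x(t)+\exp(i r^{1/\alpha}t),\qquad x(0)=x_0, \] namely $\varphi(t;0,x_0)=E_\alpha(\lambda t^\alpha)x_0+\int_0^t(t-\tau)^{\alpha-1}E_{\alpha,\alpha}(\lambda(t-\tau)^\alpha)\exp(ir^{1/\alpha}\tau)\,d\tau$, is unbounded on $\mathbb{R}_{\ge0}$.
   Context: For $\alpha\in(0,1)$ the Caputo derivative is ${}^{C}D^\alpha_{0+}x(t)=\frac{1}{\Gamma(1-\alpha)}\int_0^t(t-\tau)^{-\alpha}x'(\tau)\,d\tau$. The Mittag-Leffler functions are $E_{\alpha,\beta}(z)=\sum_{k\ge0}z^k/\Gamma(\alpha k+\beta)$, $E_\alpha=E_{\alpha,1}$. *)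

theory Defs
  imports "HOL-Analysis.Analysis"
begin

definition mittag_leffler :: "real \<Rightarrow> real \<Rightarrow> complex \<Rightarrow> complex" where
  "mittag_leffler a b z = (\<Sum>k. z ^ k / Gamma (complex_of_real (a * real k + b)))"

definition mittag_leffler1 :: "real \<Rightarrow> complex \<Rightarrow> complex" where
  "mittag_leffler1 a z = mittag_leffler a 1 z"

definition frac_sol :: "real \<Rightarrow> complex \<Rightarrow> real \<Rightarrow> complex \<Rightarrow> real \<Rightarrow> complex" where
  "frac_sol a lam w x0 t =
     mittag_leffler1 a (lam * complex_of_real (t powr a)) * x0
     + integral {0..t} (\<lambda>s. complex_of_real ((t - s) powr (a - 1))
          * mittag_leffler a a (lam * complex_of_real ((t - s) powr a))
          * exp (\<i> * complex_of_real (w * s)))"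

end

theory Submission
  imports Defs "HOL-Complex_Analysis.Complex_Analysis"
begin

text \<open>Suppose the solution \<open>\<phi>\<close> were bounded by \<open>M\<close> on \<open>[0, \<infinity>)\<close>. Then its Laplace transform \<open>\<Phi>\<close>
  is holomorphic on the right half plane with \<open>norm (\<Phi> s) \<le> M / Re s\<close>. Integrating the
  Mittag-Leffler series term by term and using the convolution theorem gives, for large real \<open>s\<close>,
  \<open>\<Phi> s * (s powr \<alpha> - \<lambda>) * (s - \<i> \<omega>) = x0 * s powr (\<alpha> - 1) * (s - \<i> \<omega>) + 1\<close> with
  \<open>\<omega> = r powr (1 / \<alpha>)\<close>, and by analytic continuation this identity holds on the whole half plane.
  The choice of \<open>\<lambda>\<close> makes \<open>(\<i> \<omega>) powr \<alpha> = \<lambda>\<close>, i.e. the forcing frequency resonates with a zero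
  of \<open>s powr \<alpha> - \<lambda>\<close> on the imaginary axis. Along \<open>s = \<i> \<omega> + \<epsilon>\<close> the left-hand side is
  then \<open>O(norm (s powr \<alpha> - \<lambda>))\<close>, which tends to \<open>0\<close>, while the right-hand side tends to \<open>1\<close>.
  The argument does not need \<open>\<alpha> < 1\<close>.\<close>

lemma Gamma_ge_powr_exp:
  fixes x T :: real
  assumes x: "x > 0" and T: "T > 0"
  shows "T powr x * exp (-2*T) / 2 \<le> Gamma x"
proof -
  define f where "f = (\<lambda>t::real. t powr (x - 1) / exp t)"
  have G: "(f has_integral Gamma x) {0..}" unfolding f_def using Gamma_integral_real[OF x] .
  have fi: "f integrable_on {T..2*T}"
    unfolding f_def using T by (intro integrable_continuous_interval continuous_intros) auto
  have "integral {T..2*T} f \<le> integral {0..} f"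
    using G T by (intro integral_subset_le fi) (auto simp: f_def has_integral_integrable)
  also have "\<dots> = Gamma x" using G by blast
  finally have I: "integral {T..2*T} f \<le> Gamma x" .
  have lb: "T powr (x - 1) * exp (-2*T) / 2 \<le> f t" if t: "t \<in> {T..2*T}" for t
  proof -
    have p: "T powr (x - 1) / 2 \<le> t powr (x - 1)"
    proof (cases "x \<ge> 1")
      case True
      then have "T powr (x - 1) \<le> t powr (x - 1)" using t T by (intro powr_mono2) auto
      then show ?thesis using powr_ge_zero[of T "x - 1"] by linarith
    next
      case False
      have "(2*T) powr (x - 1) \<le> t powr (x - 1)" using t T False by (intro powr_mono2') auto
      moreover have "(2*T) powr (x - 1) = 2 powr (x-1) * T powr (x-1)"
        using T by (simp add: powr_mult)
      moreover have "(1/2::real) \<le> 2 powr (x - 1)"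
        using x powr_mono[of "-1" "x - 1" 2] by (simp add: powr_minus)
      moreover have "(1/2) * T powr (x - 1) \<le> 2 powr (x - 1) * T powr (x - 1)"
        using \<open>1/2 \<le> 2 powr (x - 1)\<close> by (intro mult_right_mono) auto
      ultimately show ?thesis by simp
    qed
    have "exp (-2*T) \<le> exp (-t)"
      using t by simp
    then have e: "exp (-2*T) \<le> 1 / exp t"
      by (simp add: exp_minus field_simps)
    show ?thesis
      using mult_mono[OF p e] by (simp add: f_def)
  qed
  have "integral {T..2*T} (\<lambda>_. T powr (x - 1) * exp (-2*T) / 2) \<le> integral {T..2*T} f"
    using lb fi by (intro integral_le) auto
  moreover have "integral {T..2*T} (\<lambda>_. T powr (x - 1) * exp (-2*T) / 2) = T * (T powr (x - 1) * exp (-2*T) / 2)"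
    using T by simp
  moreover have "T * T powr (x - 1) = T powr x"
    using T by (simp add: powr_diff)
  ultimately show ?thesis using I T by (simp add: mult.assoc[symmetric])
qed

lemma powr_mult_of_nat: "t > 0 \<Longrightarrow> t powr (a * real k) = (t powr a) ^ k"
  by (simp add: powr_powr[symmetric] powr_realpow)

text \<open>With \<open>T powr a = 2 R + 1\<close> the lower bound for \<open>Gamma\<close> makes the terms \<open>O(2 ^ -k)\<close>.\<close>
lemma summable_mittag_leffler_real:
  fixes a b R :: real
  assumes a: "a > 0" and b: "b > 0" and R: "R \<ge> 0"
  shows "summable (\<lambda>k. R ^ k / Gamma (a * real k + b))"
proof -
  define T where "T = (2*R + 1) powr (1/a)"
  have T: "T > 0" using R by (simp add: T_def)
  have Ta: "T powr a = 2*R+1" using R a by (simp add: T_def powr_powr)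
  define C where "C = 2 * exp (2*T) / T powr b"
  have bnd: "norm (R ^ k / Gamma (a * real k + b)) \<le> C * (1/2)^k" for k
  proof -
    have xk: "a * real k + b > 0" using a b by (simp add: add_nonneg_pos)
    have g: "T powr (a * real k + b) * exp (-2*T) / 2 \<le> Gamma (a * real k + b)"
      by (rule Gamma_ge_powr_exp[OF xk T])
    have gp: "Gamma (a * real k + b) > 0" using xk by (simp add: Gamma_real_pos)
    have tp: "T powr (a * real k + b) = (2*R+1)^k * T powr b"
      using T by (simp add: powr_add powr_mult_of_nat Ta)
    have "norm (R ^ k / Gamma (a * real k + b)) = R^k / Gamma (a * real k + b)"
      using R gp by simp
    also have "\<dots> \<le> R^k / (T powr (a * real k + b) * exp (-2*T) / 2)"
      using g R gp T by (intro divide_left_mono) (auto intro!: mult_pos_pos)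
    also have "\<dots> = C * (R / (2*R+1))^k"
      using T R by (simp only: tp C_def) (simp add: field_simps exp_minus power_divide)
    also have "\<dots> \<le> C * (1/2)^k"
      using R by (intro mult_left_mono power_mono) (auto simp: C_def field_simps)
    finally show ?thesis .
  qed
  show ?thesis
    by (rule summable_comparison_test[OF _ summable_mult[OF complete_algebra_summable_geometric]])
       (use bnd in auto)
qed

lemma norm_mittag_leffler_term:
  assumes "a > 0" "b > 0"
  shows "norm (z ^ k / Gamma (complex_of_real (a * real k + b))) = norm z ^ k / Gamma (a * real k + b)"
proof -
  have "Gamma (a * real k + b) > 0" using assms by (intro Gamma_real_pos) (simp add: add_nonneg_pos)
  then show ?thesis by (simp only: Gamma_complex_of_real norm_divide norm_power norm_of_real abs_of_pos)
qed

lemma summable_norm_mittag_leffler: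
  assumes "a > 0" "b > 0"
  shows "summable (\<lambda>k. norm (z ^ k / Gamma (complex_of_real (a * real k + b))))"
  by (subst norm_mittag_leffler_term[OF assms]) (rule summable_mittag_leffler_real[OF assms norm_ge_zero])

lemma mittag_leffler_sums:
  assumes "a > 0" "b > 0"
  shows "(\<lambda>k. z ^ k / Gamma (complex_of_real (a * real k + b))) sums mittag_leffler a b z"
  unfolding mittag_leffler_def using summable_norm_cancel[OF summable_norm_mittag_leffler[OF assms]]
  by (simp add: summable_sums)

lemma isCont_mittag_leffler:
  assumes "a > 0" "b > 0"
  shows "isCont (mittag_leffler a b) z"
proof -
  have "mittag_leffler a b = (\<lambda>z. \<Sum>k. (1 / Gamma (complex_of_real (a * real k + b))) * z ^ k)"
    by (simp add: mittag_leffler_def fun_eq_iff)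
  then show ?thesis
    by (simp only:) (rule isCont_powser_converges_everywhere,
        use summable_norm_cancel[OF summable_norm_mittag_leffler[OF assms]] in simp)
qed

lemma borel_measurable_mittag_leffler:
  assumes "a > 0" "b > 0"
  shows "mittag_leffler a b \<in> borel_measurable borel"
  by (intro borel_measurable_continuous_onI continuous_at_imp_continuous_on isCont_mittag_leffler assms ballI)

lemma mittag_leffler_one_one: "mittag_leffler 1 1 z = exp z"
proof -
  have "Gamma (complex_of_real (1 * real k + 1)) = fact k" for k
    using Gamma_fact[of k, where 'a = complex] by (simp add: add.commute)
  then show ?thesis
    by (simp add: mittag_leffler_def exp_def scaleR_conv_of_real divide_inverse mult.commute)
qed

definition laplace_integrand :: "(real \<Rightarrow> complex) \<Rightarrow> complex \<Rightarrow> real \<Rightarrow> complex" where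
  "laplace_integrand f s = (\<lambda>t. indicator {0..} t *\<^sub>R (f t * exp (- (s * of_real t))))"

definition laplace :: "(real \<Rightarrow> complex) \<Rightarrow> complex \<Rightarrow> complex" where
  "laplace f s = integral\<^sup>L lborel (laplace_integrand f s)"

lemma laplace_integrand_of_real:
  "laplace_integrand f (of_real p) = (\<lambda>t. indicator {0..} t *\<^sub>R (f t * of_real (exp (- p * t))))"
  by (simp add: laplace_integrand_def fun_eq_iff exp_of_real[symmetric])

lemma nn_integral_powr_exp:
  fixes \<beta> p :: real
  assumes b: "\<beta> > 0" and p: "p > 0"
  shows "(\<integral>\<^sup>+ t. ennreal (indicator {0..} t * (t powr (\<beta> - 1) * exp (- p * t))) \<partial>lborel)
           = ennreal (Gamma \<beta> / p powr \<beta>)"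
proof -
  define h where "h = (\<lambda>t::real. indicator {0..} t * (t powr (\<beta> - 1) * exp (- p * t)))"
  define N where "N = (\<integral>\<^sup>+ t. ennreal (h t) \<partial>lborel)"
  have scaled: "ennreal (indicator {0..} (p * x) * (p * x) powr (\<beta> - 1) / exp (p * x))
      = ennreal (p powr (\<beta> - 1)) * ennreal (h x)" for x
  proof (cases "x \<ge> 0")
    case True
    then show ?thesis using p
      by (simp add: h_def powr_mult ennreal_mult'[symmetric] exp_minus field_simps)
  next
    case False
    then have "\<not> 0 \<le> p * x" using p by (simp add: mult_le_0_iff not_le zero_le_mult_iff)
    then show ?thesis using False by (simp add: h_def)
  qed
  have "ennreal (Gamma \<beta>) = (\<integral>\<^sup>+ u. ennreal (indicator {0..} u * u powr (\<beta> - 1) / exp u) \<partial>lborel)"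
    using Gamma_conv_nn_integral_real[OF b] .
  also have "\<dots> = ennreal p * (\<integral>\<^sup>+ x. ennreal (p powr (\<beta> - 1)) * ennreal (h x) \<partial>lborel)"
    using nn_integral_real_affine[of "\<lambda>u. ennreal (indicator {0..} u * u powr (\<beta> - 1) / exp u)" p 0] p
    by (simp add: scaled)
  also have "\<dots> = ennreal p * ennreal (p powr (\<beta> - 1)) * N"
    unfolding N_def h_def by (subst nn_integral_cmult) (auto simp: mult.assoc)
  also have "ennreal p * ennreal (p powr (\<beta> - 1)) = ennreal (p powr \<beta>)"
    using p by (simp add: ennreal_mult'[symmetric] powr_diff)
  finally have "ennreal (Gamma \<beta>) = ennreal (p powr \<beta>) * N" .
  moreover have "ennreal (p powr \<beta>) \<noteq> 0" "ennreal (p powr \<beta>) \<noteq> top" using p by auto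
  ultimately have "N = ennreal (Gamma \<beta>) / ennreal (p powr \<beta>)"
    by (metis mult.commute mult_divide_eq_ennreal)
  then show ?thesis
    using p b by (simp add: N_def h_def divide_ennreal Gamma_real_pos)
qed

lemma lborel_integral_powr_exp:
  fixes \<beta> p :: real
  assumes b: "\<beta> > 0" and p: "p > 0"
  shows "integrable lborel (\<lambda>t. indicator {0..} t * (t powr (\<beta> - 1) * exp (- p * t)))"
    and "(LBINT t. indicator {0..} t * (t powr (\<beta> - 1) * exp (- p * t))) = Gamma \<beta> / p powr \<beta>"
proof -
  have "integrable lborel (\<lambda>t. indicator {0..} t * (t powr (\<beta> - 1) * exp (- p * t)))
      \<and> (LBINT t. indicator {0..} t * (t powr (\<beta> - 1) * exp (- p * t))) = Gamma \<beta> / p powr \<beta>"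
    using nn_integral_powr_exp[OF b p] b p
    by (subst nn_integral_eq_integrable[symmetric]) (auto simp: Gamma_real_pos less_imp_le)
  then show "integrable lborel (\<lambda>t. indicator {0..} t * (t powr (\<beta> - 1) * exp (- p * t)))"
    and "(LBINT t. indicator {0..} t * (t powr (\<beta> - 1) * exp (- p * t))) = Gamma \<beta> / p powr \<beta>"
    by auto
qed

lemma lborel_integral_pow_exp:
  fixes c :: real
  assumes c: "c > 0"
  shows "integrable lborel (\<lambda>t. indicator {0..} t * (t ^ n * exp (- c * t)))"
    and "(LBINT t. indicator {0..} t * (t ^ n * exp (- c * t))) = fact n / c ^ Suc n"
proof -
  have b: "real (Suc n) > 0" by simp
  have ae: "AE t in lborel. indicator {0..} t * (t powr (real (Suc n) - 1) * exp (- c * t)) = indicator {0..} t * (t ^ n * exp (- c * t))"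
    using AE_lborel_singleton[of 0] by eventually_elim (auto simp: indicator_def powr_realpow)
  have m: "(\<lambda>t. indicator {0..} t * (t ^ n * exp (- c * t))) \<in> borel_measurable lborel" by measurable
  note L = lborel_integral_powr_exp[OF b c]
  show "integrable lborel (\<lambda>t. indicator {0..} t * (t ^ n * exp (- c * t)))"
    using integrable_cong_AE_imp[OF L(1) m ae] .
  have "(LBINT t. indicator {0..} t * (t ^ n * exp (- c * t))) = (LBINT t. indicator {0..} t * (t powr (real (Suc n) - 1) * exp (- c * t)))"
  proof -
    have m2: "(\<lambda>t. indicator {0..} t * (t powr (real (Suc n) - 1) * exp (- c * t))) \<in> borel_measurable lborel" by measurable
    show ?thesis using integral_cong_AE[OF m2 m ae] by (rule sym)
  qed
  also have "\<dots> = Gamma (real (Suc n)) / c powr real (Suc n)" by (rule L(2))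
  also have "\<dots> = fact n / c ^ Suc n"
  proof -
    have "Gamma (real (Suc n)) = fact n" using Gamma_fact[of n] by (simp add: add.commute)
    moreover have "c powr real (Suc n) = c ^ Suc n" using c by (rule powr_realpow)
    ultimately show ?thesis by simp
  qed
  finally show "(LBINT t. indicator {0..} t * (t ^ n * exp (- c * t))) = fact n / c ^ Suc n" .
qed

lemma laplace_sums_termwise:
  fixes c :: "nat \<Rightarrow> complex" and \<beta> :: "nat \<Rightarrow> real" and p :: real and F :: "real \<Rightarrow> complex"
  assumes b: "\<And>k. \<beta> k > 0" and p: "p > 0"
    and S: "summable (\<lambda>k. norm (c k) * (Gamma (\<beta> k) / p powr \<beta> k))"
    and F: "\<And>t. t > 0 \<Longrightarrow> (\<lambda>k. c k * of_real (t powr (\<beta> k - 1))) sums F t"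
    and Fa: "\<And>t. t > 0 \<Longrightarrow> summable (\<lambda>k. norm (c k) * t powr (\<beta> k - 1))"
    and Fm: "F \<in> borel_measurable borel"
  shows "integrable lborel (laplace_integrand F (of_real p))"
    and "laplace F (of_real p) = (\<Sum>k. c k * of_real (Gamma (\<beta> k) / p powr \<beta> k))"
  unfolding laplace_def laplace_integrand_of_real
proof -
  define f where "f = (\<lambda>k t. c k * of_real (indicator {0..} t * (t powr (\<beta> k - 1) * exp (- p * t))))"
  have fi: "integrable lborel (f k)" for k
    unfolding f_def by (intro integrable_mult_right integrable_of_real lborel_integral_powr_exp b p)
  have fI: "integral\<^sup>L lborel (f k) = c k * of_real (Gamma (\<beta> k) / p powr \<beta> k)" for k
    unfolding f_def
    by (subst integral_mult_right_zero, subst integral_of_real[OF lborel_integral_powr_exp(1)[OF b p]])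
       (simp only: lborel_integral_powr_exp(2)[OF b p])
  have fnI: "(LINT t|lborel. norm (f k t)) = norm (c k) * (Gamma (\<beta> k) / p powr \<beta> k)" for k
  proof -
    have "(\<lambda>t. norm (f k t)) = (\<lambda>t. norm (c k) * (indicator {0..} t * (t powr (\<beta> k - 1) * exp (- p * t))))"
      by (auto simp: f_def norm_mult indicator_def)
    then show ?thesis using lborel_integral_powr_exp[OF b p] by simp
  qed
  have AEs: "AE t in lborel. summable (\<lambda>k. norm (f k t))"
    using AE_lborel_singleton[of 0]
  proof eventually_elim
    case (elim t)
    show ?case
    proof (cases "t > 0")
      case True
      then show ?thesis
        using summable_mult2[OF Fa[OF True], of "exp (- p * t)"] by (simp add: f_def norm_mult mult.assoc)
    qed (use elim in \<open>simp add: f_def\<close>)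
  qed
  have sumI: "summable (\<lambda>k. LINT t|lborel. norm (f k t))"
    unfolding fnI by (rule S)
  note I = integrable_suminf[OF fi AEs sumI] integral_suminf[OF fi AEs sumI]
  have eq: "AE t in lborel. (\<Sum>k. f k t) = indicator {0..} t *\<^sub>R (F t * of_real (exp (- p * t)))"
    using AE_lborel_singleton[of 0]
  proof eventually_elim
    case (elim t)
    show ?case
    proof (cases "t > 0")
      case True
      then have "(\<lambda>k. f k t) sums (F t * of_real (exp (- p * t)))"
        using sums_mult2[OF F[OF True], of "of_real (exp (- p * t))"] by (simp add: f_def mult.assoc)
      then show ?thesis using True by (simp add: sums_iff)
    qed (use elim in \<open>simp add: f_def\<close>)
  qed
  have meas: "(\<lambda>t. indicator {0..} t *\<^sub>R (F t * of_real (exp (- p * t)))) \<in> borel_measurable lborel"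
    using Fm by measurable
  show "integrable lborel (\<lambda>t. indicator {0..} t *\<^sub>R (F t * of_real (exp (- p * t))))"
    using integrable_cong_AE_imp[OF I(1) meas eq] .
  have "(LINT t|lborel. indicator {0..} t *\<^sub>R (F t * of_real (exp (- p * t)))) = (LINT t|lborel. (\<Sum>k. f k t))"
    using eq I(1) by (intro integral_cong_AE meas borel_measurable_integrable) (auto simp: eq_commute)
  also have "\<dots> = (\<Sum>k. c k * of_real (Gamma (\<beta> k) / p powr \<beta> k))"
    using I(2) fI by simp
  finally show "(LINT t|lborel. indicator {0..} t *\<^sub>R (F t * of_real (exp (- p * t)))) = (\<Sum>k. c k * of_real (Gamma (\<beta> k) / p powr \<beta> k))" .
qed

lemma laplace_mittag_leffler:
  fixes a b p :: real and lam :: complex and F :: "real \<Rightarrow> complex"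
  assumes a: "0 < a" and b: "0 < b" and p: "0 < p" and lam: "norm lam < p powr a"
    and Fm: "F \<in> borel_measurable borel"
    and F: "\<And>t. 0 < t \<Longrightarrow> F t = of_real (t powr (b - 1)) * mittag_leffler a b (lam * of_real (t powr a))"
  shows "integrable lborel (laplace_integrand F (of_real p))"
    and "laplace F (of_real p) = of_real (p powr (a - b)) / (of_real (p powr a) - lam)"
proof -
  define c where "c = (\<lambda>k. lam ^ k / of_real (Gamma (a * real k + b)))"
  define \<beta> where "\<beta> = (\<lambda>k. a * real k + b)"
  have \<beta>_pos: "\<beta> k > 0" for k using a b by (simp add: \<beta>_def add_nonneg_pos)
  have Gamma_pos: "Gamma (a * real k + b) > 0" for k
    using \<beta>_pos[of k] by (simp add: \<beta>_def Gamma_real_pos)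
  have pa: "p powr a > 0" using p by simp
  have p\<beta>: "p powr \<beta> k = p powr b * (p powr a) ^ k" for k
    using p by (simp add: \<beta>_def powr_add powr_mult_of_nat mult.commute)
  have t\<beta>: "t powr (\<beta> k - 1) = t powr (b - 1) * (t powr a) ^ k" if "t > 0" for t k
    using that by (simp add: \<beta>_def powr_add[symmetric] powr_mult_of_nat[symmetric] algebra_simps)
  have q: "norm lam / p powr a < 1" using lam pa by simp
  have S: "summable (\<lambda>k. norm (c k) * (Gamma (\<beta> k) / p powr \<beta> k))"
  proof -
    have "(\<lambda>k. norm (c k) * (Gamma (\<beta> k) / p powr \<beta> k)) = (\<lambda>k. (1 / p powr b) * (norm lam / p powr a) ^ k)"
      using Gamma_pos
      by (auto simp: c_def \<beta>_def p\<beta>[unfolded \<beta>_def] norm_divide norm_power power_divide fun_eq_iff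
          abs_of_pos less_imp_neq[symmetric])
    then show ?thesis using q by (simp add: summable_mult)
  qed
  have sums: "(\<lambda>k. c k * of_real (t powr (\<beta> k - 1))) sums F t" if t: "t > 0" for t
  proof -
    have "(\<lambda>k. c k * of_real (t powr (\<beta> k - 1)))
        = (\<lambda>k. of_real (t powr (b - 1)) * ((lam * of_real (t powr a)) ^ k / Gamma (complex_of_real (a * real k + b))))"
      unfolding Gamma_complex_of_real using t by (auto simp: c_def t\<beta> power_mult_distrib fun_eq_iff)
    then show ?thesis using sums_mult[OF mittag_leffler_sums[OF a b]] F[OF t] by simp
  qed
  have abs_summable: "summable (\<lambda>k. norm (c k) * t powr (\<beta> k - 1))" if t: "t > 0" for t
  proof -
    have "(\<lambda>k. norm (c k) * t powr (\<beta> k - 1))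
        = (\<lambda>k. t powr (b - 1) * ((norm lam * t powr a) ^ k / Gamma (a * real k + b)))"
      using t Gamma_pos by (auto simp: c_def t\<beta> norm_divide norm_power power_mult_distrib fun_eq_iff abs_of_pos)
    then show ?thesis
      using summable_mult[OF summable_mittag_leffler_real[OF a b, of "norm lam * t powr a"]] by simp
  qed
  note L = laplace_sums_termwise[OF \<beta>_pos p S sums abs_summable Fm]
  show "integrable lborel (laplace_integrand F (of_real p))"
    by (rule L(1))
  have "(\<lambda>k. c k * of_real (Gamma (\<beta> k) / p powr \<beta> k))
      = (\<lambda>k. of_real (1 / p powr b) * (lam / of_real (p powr a)) ^ k)"
    using Gamma_pos p
    by (auto simp: c_def \<beta>_def p\<beta>[unfolded \<beta>_def] power_divide fun_eq_iff less_imp_neq[symmetric])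
  moreover have "(\<lambda>k. of_real (1 / p powr b) * (lam / of_real (p powr a)) ^ k)
      sums (of_real (1 / p powr b) * (1 / (1 - lam / of_real (p powr a))))"
    using q pa by (intro sums_mult geometric_sums) (simp add: norm_divide)
  moreover have "of_real (1 / p powr b) * (1 / (1 - lam / of_real (p powr a)))
      = of_real (p powr (a - b)) / (of_real (p powr a) - lam)"
  proof -
    have "of_real (p powr a) - lam \<noteq> 0" using lam by auto
    then show ?thesis using pa p by (simp add: powr_diff field_simps)
  qed
  ultimately show "laplace F (of_real p) = of_real (p powr (a - b)) / (of_real (p powr a) - lam)"
    using L(2) by (simp add: sums_iff)
qed

lemma laplace_exp_ii:
  fixes w p :: real
  assumes w: "\<bar>w\<bar> < p"
  shows "integrable lborel (laplace_integrand (\<lambda>t. exp (\<i> * of_real (w * t))) (of_real p))"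
    and "laplace (\<lambda>t. exp (\<i> * of_real (w * t))) (of_real p) = 1 / (of_real p - \<i> * of_real w)"
proof -
  have p: "p > 0" using w by linarith
  have lam: "norm (\<i> * of_real w) < p powr 1" using w p by (simp add: norm_mult)
  have Fm: "(\<lambda>t. exp (\<i> * of_real (w * t))) \<in> borel_measurable borel" by measurable
  have F: "exp (\<i> * of_real (w * t))
      = of_real (t powr (1 - 1)) * mittag_leffler 1 1 (\<i> * of_real w * of_real (t powr 1))" if "0 < t" for t
    using that by (simp add: mittag_leffler_one_one mult_ac)
  note L = laplace_mittag_leffler[OF zero_less_one zero_less_one p lam Fm F]
  show "integrable lborel (laplace_integrand (\<lambda>t. exp (\<i> * of_real (w * t))) (of_real p))"
    by (rule L(1))
  show "laplace (\<lambda>t. exp (\<i> * of_real (w * t))) (of_real p) = 1 / (of_real p - \<i> * of_real w)"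
    using L(2) p by simp
qed

lemma laplace_moment_bound:
  fixes \<phi> :: "real \<Rightarrow> complex" and s :: complex
  assumes \<phi>m: "\<phi> \<in> borel_measurable borel" and bnd: "\<And>t. t \<ge> 0 \<Longrightarrow> norm (\<phi> t) \<le> M"
    and s: "Re s > 0"
  shows "integrable lborel (laplace_integrand (\<lambda>t. (- of_real t) ^ n / fact n * \<phi> t) s)"
    and "(LINT t|lborel. norm (laplace_integrand (\<lambda>t. (- of_real t) ^ n / fact n * \<phi> t) s t))
           \<le> M / Re s * (1 / Re s) ^ n"
proof -
  define g where "g = laplace_integrand (\<lambda>t. (- of_real t) ^ n / fact n * \<phi> t) s"
  define bd where "bd = (\<lambda>t. M / fact n * (indicator {0..} t * (t ^ n * exp (- Re s * t))))"
  have g_bd: "norm (g t) \<le> bd t" for t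
  proof (cases "t \<ge> 0")
    case True
    have "norm (g t) = norm (\<phi> t) * (t ^ n / fact n * exp (- Re s * t))"
      using True by (simp add: g_def laplace_integrand_def norm_mult norm_divide norm_power)
    also have "\<dots> \<le> M * (t ^ n / fact n * exp (- Re s * t))"
      using bnd[OF True] True by (intro mult_right_mono) auto
    finally show ?thesis using True by (simp add: bd_def)
  next
    case False
    then show ?thesis by (simp add: g_def bd_def laplace_integrand_def)
  qed
  have bd_int: "integrable lborel bd"
    unfolding bd_def by (intro integrable_mult_right lborel_integral_pow_exp(1) s)
  have "g \<in> borel_measurable lborel"
    unfolding g_def laplace_integrand_def using \<phi>m by measurable
  then show g_int: "integrable lborel g"
    by (rule Bochner_Integration.integrable_bound[OF bd_int])
       (intro AE_I2 order.trans[OF g_bd], simp only: real_norm_def abs_ge_self)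
  have "(LINT t|lborel. norm (g t)) \<le> integral\<^sup>L lborel bd"
    by (intro integral_mono integrable_norm g_int bd_int g_bd)
  also have "\<dots> = M / Re s * (1 / Re s) ^ n"
    unfolding bd_def integral_mult_right_zero lborel_integral_pow_exp(2)[OF s]
    using s by (simp add: power_divide)
  finally show "(LINT t|lborel. norm (g t)) \<le> M / Re s * (1 / Re s) ^ n" .
qed

lemma laplace_bounded:
  fixes \<phi> :: "real \<Rightarrow> complex" and s :: complex
  assumes \<phi>m: "\<phi> \<in> borel_measurable borel" and bnd: "\<And>t. t \<ge> 0 \<Longrightarrow> norm (\<phi> t) \<le> M"
    and s: "Re s > 0"
  shows "norm (laplace \<phi> s) \<le> M / Re s"
proof -
  note moment = laplace_moment_bound[OF \<phi>m bnd s, of 0]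
  have "norm (laplace \<phi> s) \<le> (LINT t|lborel. norm (laplace_integrand \<phi> s t))"
    unfolding laplace_def by (rule integral_norm_bound)
  with moment(2) show ?thesis by simp
qed

lemma laplace_power_series:
  fixes \<phi> :: "real \<Rightarrow> complex" and s0 z :: complex
  assumes \<phi>m: "\<phi> \<in> borel_measurable borel" and bnd: "\<And>t. t \<ge> 0 \<Longrightarrow> norm (\<phi> t) \<le> M"
    and s0: "Re s0 > 0" and z: "norm z < Re s0"
  shows "(\<lambda>i. laplace (\<lambda>t. (- of_real t) ^ i / fact i * \<phi> t) s0 * z ^ i) sums laplace \<phi> (s0 + z)"
proof -
  note moment = laplace_moment_bound[OF \<phi>m bnd s0]
  define f where "f = (\<lambda>i t. laplace_integrand (\<lambda>t. (- of_real t) ^ i / fact i * \<phi> t) s0 t * z ^ i)"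
  have f_int: "integrable lborel (f i)" for i
    unfolding f_def by (intro integrable_mult_left moment(1))
  have bound: "(LINT t|lborel. norm (f i t)) \<le> M / Re s0 * (norm z / Re s0) ^ i" for i
  proof -
    have "(LINT t|lborel. norm (f i t))
        = (LINT t|lborel. norm (laplace_integrand (\<lambda>t. (- of_real t) ^ i / fact i * \<phi> t) s0 t)) * norm z ^ i"
      by (simp add: f_def norm_mult norm_power)
    also have "\<dots> \<le> M / Re s0 * (1 / Re s0) ^ i * norm z ^ i"
      by (intro mult_right_mono moment(2) zero_le_power norm_ge_zero)
    finally show ?thesis by (simp add: power_divide)
  qed
  have "summable (\<lambda>i. M / Re s0 * (norm z / Re s0) ^ i)"
    using z s0 by (intro summable_mult summable_geometric) simp
  then have f_summable: "summable (\<lambda>i. LINT t|lborel. norm (f i t))"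
    by (intro summable_comparison_test[OF _ \<open>summable _\<close>])
       (use bound in \<open>auto intro!: exI[of _ 0] simp: integral_nonneg_AE\<close>)
  have f_norm: "norm (f i t) = indicator {0..} t * norm (\<phi> t) * exp (- (Re s0 * t)) * ((\<bar>t\<bar> * norm z) ^ i / fact i)"
    for i t
    by (simp add: f_def laplace_integrand_def norm_mult norm_divide norm_power power_mult_distrib)
  have "summable (\<lambda>i. norm (f i t))" for t
    unfolding f_norm using summable_exp[of "\<bar>t\<bar> * norm z"]
    by (intro summable_mult) (simp add: divide_inverse mult.commute)
  then have "AE t in lborel. summable (\<lambda>i. norm (f i t))" by simp
  note S = sums_integral[OF f_int this f_summable]
  have "(\<lambda>i. f i t) sums laplace_integrand \<phi> (s0 + z) t" for t
  proof -
    have "(\<lambda>i. laplace_integrand \<phi> s0 t * ((- (z * of_real t)) ^ i /\<^sub>R fact i))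
        sums (laplace_integrand \<phi> s0 t * exp (- (z * of_real t)))"
      by (rule sums_mult[OF exp_converges])
    moreover have "laplace_integrand \<phi> s0 t * ((- (z * of_real t)) ^ i /\<^sub>R fact i) = f i t" for i
      by (simp add: f_def laplace_integrand_def power_mult_distrib scaleR_conv_of_real divide_inverse
          power_minus[of "z * of_real t"] power_minus[of "of_real t"] mult_ac)
    moreover have "laplace_integrand \<phi> s0 t * exp (- (z * of_real t)) = laplace_integrand \<phi> (s0 + z) t"
      by (simp add: laplace_integrand_def distrib_right exp_diff exp_minus field_simps)
    ultimately show ?thesis by simp
  qed
  then have "(\<lambda>t. \<Sum>i. f i t) = laplace_integrand \<phi> (s0 + z)"
    by (auto simp: sums_iff fun_eq_iff)
  with S show ?thesis by (simp add: f_def laplace_def)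
qed

lemma laplace_holomorphic:
  fixes \<phi> :: "real \<Rightarrow> complex"
  assumes \<phi>m: "\<phi> \<in> borel_measurable borel" and bnd: "\<And>t. t \<ge> 0 \<Longrightarrow> norm (\<phi> t) \<le> M"
  shows "laplace \<phi> holomorphic_on {s. Re s > 0}"
proof -
  have "laplace \<phi> field_differentiable at s0" if s0: "Re s0 > 0" for s0
  proof -
    have "laplace \<phi> holomorphic_on ball s0 (Re s0)"
    proof (rule power_series_holomorphic)
      fix w assume "w \<in> ball s0 (Re s0)"
      then have "norm (w - s0) < Re s0" by (simp add: dist_norm norm_minus_commute)
      from laplace_power_series[OF \<phi>m bnd s0 this]
      show "(\<lambda>n. laplace (\<lambda>t. (- of_real t) ^ n / fact n * \<phi> t) s0 * (w - s0) ^ n) sums laplace \<phi> w"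
        by simp
    qed
    then show ?thesis
      by (rule holomorphic_on_imp_differentiable_at) (use s0 in auto)
  qed
  then show ?thesis
    by (simp add: holomorphic_on_open open_halfspace_Re_gt field_differentiable_def)
qed

definition causal_conv :: "(real \<Rightarrow> complex) \<Rightarrow> (real \<Rightarrow> complex) \<Rightarrow> real \<Rightarrow> complex" where
  "causal_conv G H t = (LINT s|lborel. indicator {0..t} s *\<^sub>R (G (t - s) * H s))"

lemma borel_measurable_causal_conv:
  fixes G H :: "real \<Rightarrow> complex"
  assumes Gm: "G \<in> borel_measurable borel" and Hm: "H \<in> borel_measurable borel"
  shows "causal_conv G H \<in> borel_measurable borel"
proof -
  define T where "T = {x::real \<times> real. 0 \<le> snd x \<and> snd x \<le> fst x}"
  have "T \<in> sets borel"
    unfolding T_def by (intro borel_closed closed_Collect_conj closed_Collect_le continuous_intros)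
  then have "T \<in> sets (lborel \<Otimes>\<^sub>M lborel)" by (simp add: borel_prod[symmetric])
  then have "(\<lambda>x. indicator T x *\<^sub>R (G (fst x - snd x) * H (snd x))) \<in> borel_measurable (lborel \<Otimes>\<^sub>M lborel)"
    using Gm Hm by measurable
  moreover have "(\<lambda>x. indicator T x *\<^sub>R (G (fst x - snd x) * H (snd x)))
      = (\<lambda>(t, s). indicator {0..t} s *\<^sub>R (G (t - s) * H s))"
    by (auto simp: T_def indicator_def fun_eq_iff)
  ultimately have "causal_conv G H \<in> borel_measurable lborel"
    unfolding causal_conv_def by (intro lborel.borel_measurable_lebesgue_integral) simp
  then show ?thesis by simp
qed

lemma set_integrable_causal_conv:
  fixes G H :: "real \<Rightarrow> complex"
  assumes p: "0 \<le> p" and Gm: "G \<in> borel_measurable borel" and Hm: "H \<in> borel_measurable borel"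
    and Hb: "\<And>s. norm (H s) \<le> B"
    and Gi: "integrable lborel (laplace_integrand G (of_real p))"
  shows "set_integrable lborel {0..t} (\<lambda>s. G (t - s) * H s)"
  unfolding set_integrable_def
proof (rule Bochner_Integration.integrable_bound)
  define G' where "G' = laplace_integrand G (of_real p)"
  have B: "B \<ge> 0" using Hb[of 0] norm_ge_zero[of "H 0"] by linarith
  show "integrable lborel (\<lambda>s. B * exp (p * t) * norm (G' (t + (-1) * s)))"
    unfolding G'_def by (intro integrable_mult_right integrable_norm lborel_integrable_real_affine[OF Gi]) simp
  show "(\<lambda>s. indicator {0..t} s *\<^sub>R (G (t - s) * H s)) \<in> borel_measurable lborel"
    using Gm Hm by measurable
  show "AE s in lborel. norm (indicator {0..t} s *\<^sub>R (G (t - s) * H s))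
      \<le> norm (B * exp (p * t) * norm (G' (t + (-1) * s)))"
  proof (rule AE_I2)
    fix s
    show "norm (indicator {0..t} s *\<^sub>R (G (t - s) * H s)) \<le> norm (B * exp (p * t) * norm (G' (t + (-1) * s)))"
    proof (cases "0 \<le> s \<and> s \<le> t")
      case True
      have "exp (p * t) * exp (- p * (t - s)) = exp (p * s)" by (simp add: exp_add[symmetric] algebra_simps)
      moreover have "1 \<le> exp (p * s)" using True p by simp
      ultimately have e: "norm (G (t - s)) \<le> exp (p * t) * (norm (G (t - s)) * exp (- p * (t - s)))"
        by (metis mult.left_commute mult.right_neutral mult_left_mono norm_ge_zero)
      have "norm (G (t - s) * H s) \<le> norm (G (t - s)) * B"
        using Hb[of s] by (simp add: norm_mult mult_left_mono)
      also have "\<dots> \<le> exp (p * t) * (norm (G (t - s)) * exp (- p * (t - s))) * B"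
        using e B by (rule mult_right_mono)
      finally show ?thesis
        using True B by (simp add: G'_def laplace_integrand_of_real norm_mult mult_ac)
    next
      case False
      then show ?thesis by (auto simp: indicator_def)
    qed
  qed
qed

lemma lborel_pair_convolution:
  fixes G H :: "real \<Rightarrow> complex"
  assumes G: "integrable lborel G" and H: "integrable lborel H"
  shows "integrable (lborel \<Otimes>\<^sub>M lborel) (\<lambda>(s, t). G (t - s) * H s)"
    and "(LBINT t. LBINT s. G (t - s) * H s) = (LBINT u. G u) * (LBINT s. H s)"
proof -
  have shift: "(LBINT t. F (t - s)) = (LBINT u. F u)" for F :: "real \<Rightarrow> 'b::{banach, second_countable_topology}" and s
    using lborel_integral_real_affine[of 1 F "-s"] by simp
  have Gm: "G \<in> borel_measurable borel" and Hm: "H \<in> borel_measurable borel"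
    using borel_measurable_integrable[OF G] borel_measurable_integrable[OF H] by simp_all
  show fi: "integrable (lborel \<Otimes>\<^sub>M lborel) (\<lambda>(s, t). G (t - s) * H s)"
  proof (rule lborel_pair.Fubini_integrable)
    show "(\<lambda>(s, t). G (t - s) * H s) \<in> borel_measurable (lborel \<Otimes>\<^sub>M lborel)"
      using Gm Hm by measurable
    have "(\<lambda>s. LBINT t. norm (G (t - s) * H s)) = (\<lambda>s. norm (H s) * (LBINT u. norm (G u)))"
      using shift[of "\<lambda>u. norm (G u)"] by (auto simp: norm_mult fun_eq_iff)
    then show "integrable lborel (\<lambda>s. LBINT t. norm (case (s, t) of (s, t) \<Rightarrow> G (t - s) * H s))"
      using H by (simp add: integrable_norm)
    have "integrable lborel (\<lambda>t. G (- s + 1 * t))" for s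
      by (rule lborel_integrable_real_affine[OF G]) simp
    then show "AE s in lborel. integrable lborel (\<lambda>t. case (s, t) of (s, t) \<Rightarrow> G (t - s) * H s)"
      by simp
  qed
  have "(LBINT t. LBINT s. G (t - s) * H s) = (LBINT s. LBINT t. G (t - s) * H s)"
    using lborel_pair.Fubini_integral[OF fi] by simp
  also have "\<dots> = (LBINT s. H s * (LBINT u. G u))"
    using shift[of G] by (simp add: mult.commute)
  finally show "(LBINT t. LBINT s. G (t - s) * H s) = (LBINT u. G u) * (LBINT s. H s)"
    by (simp add: mult.commute)
qed

lemma laplace_causal_conv:
  fixes G H :: "real \<Rightarrow> complex" and p :: real
  assumes Gi: "integrable lborel (laplace_integrand G (of_real p))"
    and Hi: "integrable lborel (laplace_integrand H (of_real p))"
  shows "integrable lborel (laplace_integrand (causal_conv G H) (of_real p))"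
    and "laplace (causal_conv G H) (of_real p) = laplace G (of_real p) * laplace H (of_real p)"
proof -
  define G' where "G' = laplace_integrand G (of_real p)"
  define H' where "H' = laplace_integrand H (of_real p)"
  note conv = lborel_pair_convolution[OF Gi[folded G'_def] Hi[folded H'_def]]
  have product: "G' (t - s) * H' s = (indicator {0..} t * exp (- p * t)) *\<^sub>R (indicator {0..t} s *\<^sub>R (G (t - s) * H s))"
    for s t
  proof (cases "0 \<le> s \<and> s \<le> t")
    case True
    have "exp (- p * (t - s)) * exp (- p * s) = exp (- p * t)" by (simp add: exp_add[symmetric] algebra_simps)
    then have "complex_of_real (exp (- p * (t - s))) * complex_of_real (exp (- p * s)) = complex_of_real (exp (- p * t))"
      by (metis of_real_mult)
    then show ?thesis using True
      by (simp add: G'_def H'_def laplace_integrand_of_real indicator_def scaleR_conv_of_real mult_ac)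
  next
    case False
    then show ?thesis by (auto simp: G'_def H'_def laplace_integrand_of_real indicator_def)
  qed
  have inner: "(LBINT s. G' (t - s) * H' s) = laplace_integrand (causal_conv G H) (of_real p) t" for t
  proof -
    have "(LBINT s. G' (t - s) * H' s)
        = (LBINT s. (indicator {0..} t * exp (- p * t)) *\<^sub>R (indicator {0..t} s *\<^sub>R (G (t - s) * H s)))"
      by (simp only: product)
    also have "\<dots> = (indicator {0..} t * exp (- p * t)) *\<^sub>R causal_conv G H t"
      unfolding causal_conv_def by (rule integral_scaleR_right)
    finally show ?thesis by (simp add: laplace_integrand_of_real scaleR_conv_of_real mult_ac)
  qed
  show "integrable lborel (laplace_integrand (causal_conv G H) (of_real p))"
    using lborel_pair.integrable_snd[OF conv(1)] by (simp add: inner)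
  show "laplace (causal_conv G H) (of_real p) = laplace G (of_real p) * laplace H (of_real p)"
    using conv(2) unfolding inner by (simp add: laplace_def G'_def H'_def)
qed

lemma holomorphic_eq_on_right_half_plane:
  fixes f g :: "complex \<Rightarrow> complex" and p0 :: real
  assumes f: "f holomorphic_on {s. Re s > 0}" and g: "g holomorphic_on {s. Re s > 0}"
    and eq: "\<And>p. p > p0 \<Longrightarrow> f (of_real p) = g (of_real p)"
    and s: "Re s > 0"
  shows "f s = g s"
proof -
  define q where "q = max p0 0"
  have "f s - g s = 0"
  proof (rule analytic_continuation[of "\<lambda>s. f s - g s" "{s. Re s > 0}" "of_real ` {q<..}" "of_real (q + 1)"])
    show "(\<lambda>s. f s - g s) holomorphic_on {s. Re s > 0}" using f g by (intro holomorphic_intros)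
    show "open {s::complex. Re s > 0}" by (rule open_halfspace_Re_gt)
    show "connected {s::complex. Re s > 0}" by (rule convex_connected[OF convex_halfspace_Re_gt])
    show "of_real ` {q<..} \<subseteq> {s. Re s > 0}" by (auto simp: q_def)
    show "of_real (q + 1) \<in> {s. Re s > 0}" by (simp add: q_def)
    show "of_real (q + 1) islimpt (of_real ` {q<..} :: complex set)"
      unfolding islimpt_approachable
    proof (intro allI impI)
      fix e :: real assume e: "e > 0"
      show "\<exists>x'\<in>of_real ` {q<..}. x' \<noteq> complex_of_real (q + 1) \<and> dist x' (complex_of_real (q + 1)) < e"
      proof (intro bexI conjI)
        show "complex_of_real (q + 1 + min 1 (e/2)) \<in> of_real ` {q<..}"
          using e by (intro imageI) simp
        show "complex_of_real (q + 1 + min 1 (e/2)) \<noteq> complex_of_real (q + 1)" using e by simp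
        show "dist (complex_of_real (q + 1 + min 1 (e/2))) (complex_of_real (q + 1)) < e"
          using e by (simp add: dist_norm)
      qed
    qed
    show "f z - g z = 0" if "z \<in> of_real ` {q<..}" for z using that eq by (auto simp: q_def)
    show "s \<in> {s. Re s > 0}" using s by simp
  qed
  then show ?thesis by simp
qed

text \<open>The bound \<open>norm (laplace \<phi> (c + e)) \<le> M / e\<close> forces the left-hand side of \<open>eq\<close> to \<open>0\<close> as
  \<open>e \<rightarrow> 0+\<close>.\<close>
lemma bounded_laplace_no_double_pole:
  fixes \<phi> :: "real \<Rightarrow> complex" and P Q :: "complex \<Rightarrow> complex" and c :: complex
  assumes \<phi>m: "\<phi> \<in> borel_measurable borel" and bnd: "\<And>t. t \<ge> 0 \<Longrightarrow> norm (\<phi> t) \<le> M"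
    and c: "Re c = 0"
    and eq: "\<And>s. Re s > 0 \<Longrightarrow> laplace \<phi> s * (Q s * (s - c)) = P s"
    and Q: "isCont Q c" "Q c = 0" and P: "isCont P c" "P c \<noteq> 0"
  shows False
proof -
  define s where "s = (\<lambda>e::real. c + of_real e)"
  have "((\<lambda>e::real. c + of_real e) \<longlongrightarrow> c + of_real 0) (at_right 0)"
    by (intro tendsto_intros)
  then have s_lim: "(s \<longlongrightarrow> c) (at_right 0)" by (simp add: s_def)
  have "norm (P (s e)) \<le> M * norm (Q (s e))" if e: "e > 0" for e
  proof -
    have Re: "Re (s e) = e" using c by (simp add: s_def)
    have "norm (P (s e)) = norm (laplace \<phi> (s e) * (Q (s e) * of_real e))"
      using eq[of "s e"] Re e by (simp add: s_def)
    also have "\<dots> = norm (laplace \<phi> (s e)) * norm (Q (s e)) * e"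
      using e by (simp add: norm_mult)
    also have "\<dots> \<le> (M / e) * norm (Q (s e)) * e"
      using laplace_bounded[OF \<phi>m bnd, of "s e"] Re e by (intro mult_right_mono) auto
    also have "\<dots> = M * norm (Q (s e))" using e by simp
    finally show ?thesis .
  qed
  then have ev: "eventually (\<lambda>e. norm (P (s e)) \<le> M * norm (Q (s e))) (at_right 0)"
    by (auto simp: eventually_at_right_field intro!: exI[of _ 1])
  have "((\<lambda>e. norm (P (s e))) \<longlongrightarrow> norm (P c)) (at_right 0)"
    using isCont_tendsto_compose[OF P(1) s_lim] by (rule tendsto_norm)
  moreover have "((\<lambda>e. Q (s e)) \<longlongrightarrow> 0) (at_right 0)"
    using isCont_tendsto_compose[OF Q(1) s_lim] Q(2) by simp
  then have "((\<lambda>e. M * norm (Q (s e))) \<longlongrightarrow> 0) (at_right 0)"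
    by (intro tendsto_mult_right_zero tendsto_norm_zero)
  ultimately have "norm (P c) \<le> 0"
    using tendsto_le[OF trivial_limit_at_right_real _ _ ev] by blast
  with P(2) show False by simp
qed

lemma powr_ii_times_of_real:
  fixes w a :: real assumes w: "w > 0"
  shows "(\<i> * of_real w) powr of_real a = of_real (w powr a) * (of_real (cos (pi * a / 2)) + \<i> * of_real (sin (pi * a / 2)))"
proof -
  have "Ln (\<i> * of_real w) = of_real (ln w) + \<i> * of_real (pi / 2)"
    using Ln_times_of_real[of w \<i>] w by (simp add: Ln_of_real Ln_ii mult.commute)
  then have "(\<i> * of_real w) powr of_real a = exp (of_real (a * ln w)) * exp (\<i> * of_real (pi * a / 2))"
    using w by (simp add: powr_def exp_add[symmetric] algebra_simps)
  also have "exp (of_real (a * ln w)) = of_real (w powr a)"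
    using w by (simp only: exp_of_real) (simp add: powr_def mult.commute)
  finally show ?thesis
    by (simp only: exp_Euler cos_of_real sin_of_real)
qed

definition ml_kernel :: "real \<Rightarrow> complex \<Rightarrow> real \<Rightarrow> complex" where
  "ml_kernel a lam u = of_real (u powr (a - 1)) * mittag_leffler a a (lam * of_real (u powr a))"

lemma borel_measurable_ml_kernel:
  assumes a: "0 < a"
  shows "ml_kernel a lam \<in> borel_measurable borel"
  unfolding ml_kernel_def[abs_def]
  by (intro borel_measurable_times measurable_compose[OF _ borel_measurable_mittag_leffler[OF a a]]) measurable

lemma borel_measurable_mittag_leffler1:
  assumes a: "0 < a"
  shows "(\<lambda>t. mittag_leffler1 a (lam * of_real (t powr a))) \<in> borel_measurable borel"
  unfolding mittag_leffler1_def
  by (rule measurable_compose[OF _ borel_measurable_mittag_leffler[OF a zero_less_one]]) measurable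

lemma frac_sol_eq_causal_conv:
  assumes a: "0 < a"
  shows "frac_sol a lam w x0 t = mittag_leffler1 a (lam * of_real (t powr a)) * x0
           + causal_conv (ml_kernel a lam) (\<lambda>s. exp (\<i> * of_real (w * s))) t"
proof (cases "t \<ge> 0")
  case True
  define p where "p = (norm lam + 1) powr (1 / a)"
  have lam1: "0 < norm lam + 1" by (rule add_nonneg_pos) simp_all
  have p: "0 < p" using lam1 by (simp add: p_def)
  have "norm lam < p powr a" using a lam1 by (simp add: p_def powr_powr)
  from laplace_mittag_leffler(1)[OF a a p this borel_measurable_ml_kernel[OF a]]
  have "integrable lborel (laplace_integrand (ml_kernel a lam) (of_real p))"
    by (simp add: ml_kernel_def)
  then have "set_integrable lborel {0..t} (\<lambda>s. ml_kernel a lam (t - s) * exp (\<i> * of_real (w * s)))"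
    by (intro set_integrable_causal_conv[of p _ _ 1] borel_measurable_ml_kernel a) (use p in auto)
  then have "integral {0..t} (\<lambda>s. ml_kernel a lam (t - s) * exp (\<i> * of_real (w * s)))
      = causal_conv (ml_kernel a lam) (\<lambda>s. exp (\<i> * of_real (w * s))) t"
    by (simp add: set_borel_integral_eq_integral(2)[symmetric] causal_conv_def set_lebesgue_integral_def)
  then show ?thesis by (simp add: frac_sol_def ml_kernel_def)
next
  case False
  then show ?thesis by (simp add: frac_sol_def causal_conv_def)
qed

lemma borel_measurable_frac_sol:
  assumes a: "0 < a"
  shows "frac_sol a lam w x0 \<in> borel_measurable borel"
proof -
  have "causal_conv (ml_kernel a lam) (\<lambda>s. exp (\<i> * of_real (w * s))) \<in> borel_measurable borel"
    by (intro borel_measurable_causal_conv borel_measurable_ml_kernel a) measurable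
  then show ?thesis
    using borel_measurable_mittag_leffler1[OF a, of lam]
    by (simp add: frac_sol_eq_causal_conv[OF a, abs_def])
qed

lemma laplace_frac_sol_real:
  fixes a w p :: real and lam x0 :: complex
  assumes a: "0 < a" and w: "\<bar>w\<bar> < p" and lam: "norm lam < p powr a"
  shows "laplace (frac_sol a lam w x0) (of_real p) * ((of_real (p powr a) - lam) * (of_real p - \<i> * of_real w))
           = x0 * of_real (p powr (a - 1)) * (of_real p - \<i> * of_real w) + 1"
proof -
  have p: "0 < p" using w by linarith
  define E where "E = (\<lambda>t. mittag_leffler1 a (lam * of_real (t powr a)))"
  define H where "H = (\<lambda>s. exp (\<i> * of_real (w * s)))"
  define C where "C = causal_conv (ml_kernel a lam) H"
  have "E t = of_real (t powr (1 - 1)) * mittag_leffler a 1 (lam * of_real (t powr a))" if "0 < t" for t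
    using that by (simp add: E_def mittag_leffler1_def)
  note LE = laplace_mittag_leffler[OF a zero_less_one p lam borel_measurable_mittag_leffler1[OF a, of lam, folded E_def] this]
  have "ml_kernel a lam t = of_real (t powr (a - 1)) * mittag_leffler a a (lam * of_real (t powr a))" for t
    by (simp add: ml_kernel_def)
  note LG = laplace_mittag_leffler[OF a a p lam borel_measurable_ml_kernel[OF a] this]
  note LH = laplace_exp_ii[OF w, folded H_def]
  note LC = laplace_causal_conv[OF LG(1) LH(1), folded C_def]
  have "laplace_integrand (frac_sol a lam w x0) (of_real p)
      = (\<lambda>t. laplace_integrand E (of_real p) t * x0 + laplace_integrand C (of_real p) t)"
    by (simp add: fun_eq_iff laplace_integrand_def frac_sol_eq_causal_conv[OF a] E_def C_def H_def
        scaleR_conv_of_real algebra_simps)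
  then have "laplace (frac_sol a lam w x0) (of_real p) = laplace E (of_real p) * x0 + laplace C (of_real p)"
    using LE(1) LC(1) by (simp add: laplace_def)
  also have "\<dots> = x0 * of_real (p powr (a - 1)) / (of_real (p powr a) - lam)
      + 1 / ((of_real (p powr a) - lam) * (of_real p - \<i> * of_real w))"
    using p by (simp add: LE(2) LC(2) LG(2) LH(2))
  finally have \<Phi>: "laplace (frac_sol a lam w x0) (of_real p) = \<dots>" .
  have A: "of_real (p powr a) - lam \<noteq> 0" using lam by auto
  have B: "of_real p - \<i> * of_real w \<noteq> 0" using p by (auto simp: complex_eq_iff)
  have "(X / A + 1 / (A * B)) * (A * B) = X * B + 1" if "A \<noteq> 0" "B \<noteq> 0" for X A B :: complex
    using that by (simp add: field_simps)
  from this[OF A B] show ?thesis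
    unfolding \<Phi> by (simp add: mult.assoc)
qed

lemma laplace_frac_sol:
  fixes a w M :: real and lam x0 s :: complex
  assumes a: "0 < a" and bnd: "\<And>t. t \<ge> 0 \<Longrightarrow> norm (frac_sol a lam w x0 t) \<le> M" and s: "Re s > 0"
  shows "laplace (frac_sol a lam w x0) s * ((s powr of_real a - lam) * (s - \<i> * of_real w))
           = x0 * s powr of_real (a - 1) * (s - \<i> * of_real w) + 1"
proof (rule holomorphic_eq_on_right_half_plane[OF _ _ _ s])
  have nonpos: "z \<notin> \<real>\<^sub>\<le>\<^sub>0" if "z \<in> {s. Re s > 0}" for z
    using that by (auto simp: complex_nonpos_Reals_iff)
  show "(\<lambda>s. laplace (frac_sol a lam w x0) s * ((s powr of_real a - lam) * (s - \<i> * of_real w)))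
      holomorphic_on {s. Re s > 0}"
    using laplace_holomorphic[OF borel_measurable_frac_sol[OF a] bnd] nonpos
    by (intro holomorphic_intros) auto
  show "(\<lambda>s. x0 * s powr of_real (a - 1) * (s - \<i> * of_real w) + 1) holomorphic_on {s. Re s > 0}"
    using nonpos by (intro holomorphic_intros) auto
  fix p assume "p > max \<bar>w\<bar> (norm lam powr (1 / a))"
  then have w: "\<bar>w\<bar> < p" and "norm lam powr (1 / a) < p" by auto
  then have "norm lam < p powr a"
    using a powr_less_mono2[of a "norm lam powr (1 / a)" p] by (simp add: powr_powr)
  moreover have "of_real p powr of_real a = (of_real (p powr a) :: complex)"
    using w by (intro powr_of_real) linarith
  moreover have "of_real p powr of_real (a - 1) = (of_real (p powr (a - 1)) :: complex)"
    using w by (intro powr_of_real) linarith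
  ultimately show "laplace (frac_sol a lam w x0) (of_real p) * ((of_real p powr of_real a - lam) * (of_real p - \<i> * of_real w))
      = x0 * of_real p powr of_real (a - 1) * (of_real p - \<i> * of_real w) + 1"
    using laplace_frac_sol_real[OF a w] by simp
qed

theorem mainTheorem9:
  fixes \<alpha> r :: real and x0 :: complex
  assumes "0 < \<alpha>" and "\<alpha> < 1" and "0 < r"
  defines "lam \<equiv> complex_of_real r * (complex_of_real (cos (pi * \<alpha> / 2)) + \<i> * complex_of_real (sin (pi * \<alpha> / 2)))"
  shows "\<not> bounded ((\<lambda>t. frac_sol \<alpha> lam (r powr (1 / \<alpha>)) x0 t) ` {0..})"
proof
  define w where "w = r powr (1 / \<alpha>)"
  assume "bounded ((\<lambda>t. frac_sol \<alpha> lam (r powr (1 / \<alpha>)) x0 t) ` {0..})"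
  then obtain M where M: "\<And>t. t \<ge> 0 \<Longrightarrow> norm (frac_sol \<alpha> lam w x0 t) \<le> M"
    unfolding bounded_iff w_def by auto
  have w: "0 < w" using \<open>0 < r\<close> by (simp add: w_def)
  have "w powr \<alpha> = r" using \<open>0 < \<alpha>\<close> \<open>0 < r\<close> by (simp add: w_def powr_powr)
  then have lam: "(\<i> * of_real w) powr of_real \<alpha> = lam"
    using powr_ii_times_of_real[OF w, of \<alpha>] by (simp add: lam_def)
  have iw: "\<i> * of_real w \<notin> \<real>\<^sub>\<le>\<^sub>0" using w by (simp add: complex_nonpos_Reals_iff)
  show False
  proof (rule bounded_laplace_no_double_pole[where Q = "\<lambda>s. s powr of_real \<alpha> - lam"
        and P = "\<lambda>s. x0 * s powr of_real (\<alpha> - 1) * (s - \<i> * of_real w) + 1" and c = "\<i> * of_real w"])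
    show "frac_sol \<alpha> lam w x0 \<in> borel_measurable borel"
      by (rule borel_measurable_frac_sol[OF \<open>0 < \<alpha>\<close>])
    show "laplace (frac_sol \<alpha> lam w x0) s * ((s powr of_real \<alpha> - lam) * (s - \<i> * of_real w))
        = x0 * s powr of_real (\<alpha> - 1) * (s - \<i> * of_real w) + 1" if "Re s > 0" for s
      by (rule laplace_frac_sol[OF \<open>0 < \<alpha>\<close> M that])
  qed (use M lam iw in \<open>auto intro!: continuous_intros\<close>)
qed

end
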